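(* Let $A=(-1,0)$ and $B=(1,0)$. For $x\in\mathbb{R}^2$ with $|x|=r>1$, define $P^2(x)$ by two steps on the origin-centered circle of radius $r$. First, $y$ is the second intersection point of the line $xA$ with this circle. Then $P^2(x)$ is the second intersection point of the line $yB$ with this circle. Let $\varphi_1$ be the time-$1$ flow of the vector field $Y=-\frac{4\sin\alpha}{r}\frac{\partial}{\partial\alpha}$, written in polar coordinates $(\alpha,r)$. Then there exist constants $R$ and $C_5$ such that $$|P^2(x)-\varphi_1(x)|\le\frac{C_5}{|x|}$$ for all $x$ with $|x|\ge R$.
   Context: The vector $\partial/\partial\alpha$ at a point at distance $r$ from the origin has Euclidean length $r$. *)

theory Defs
  imports "HOL-Analysis.Analysis"
begin

text \<open>We identify the plane R^2 with the complex numbers. A = -1, B = 1.\<close>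

definition second_int :: "complex \<Rightarrow> complex \<Rightarrow> complex" where
  "second_int p q = (THE y. cmod y = cmod p \<and> (\<exists>t::real. y = p + of_real t * (q - p)) \<and> y \<noteq> p)"

definition P2 :: "complex \<Rightarrow> complex" where
  "P2 x = second_int (second_int x (-1)) 1"

text \<open>The vector field Y = -(4 sin alpha / r) d/d alpha in Cartesian form:
at z = r e^{i alpha}, d/d alpha = i z and sin alpha = Im z / r.\<close>
definition Yfield :: "complex \<Rightarrow> complex" where
  "Yfield z = - (of_real (4 * (Im z / cmod z) / cmod z)) * (\<i> * z)"

definition phi1 :: "complex \<Rightarrow> complex" where
  "phi1 x = (THE \<gamma>. \<gamma> 0 = x \<and> (\<forall>t. (\<gamma> has_vector_derivative Yfield (\<gamma> t)) (at t))) 1"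

end

theory Submission
  imports Defs
begin

text \<open>On the circle |z| = r both maps are Moebius transformations of the disc |z| < r fixing
  \<open>\<plusminus>r\<close>. Each step of P2 is the chord map p \<mapsto> r^2 (q - p) / (r^2 - q p) with q = -1 and then q = 1,
  and their composition is the hyperbolic translation with parameter
  2r / (1 + r^2) = tanh (2 artanh (1/r)). On the circle, Y is the Moebius field
  (2/r^2)(r^2 - z^2), whose flow is the hyperbolic translation with parameter tanh (2t/r).
  So P2 is the flow of Y at time r artanh (1/r) = 1 + O(1/r^2), and since |Y| \<le> 4 the points
  reached at that time and at time 1 are O(1/r^2) apart.\<close>

lemma cmod_add_real_mult_power2:
  "cmod (p + of_real t * d)^2 = cmod p^2 + 2 * t * Re (p * cnj d) + t^2 * cmod d^2"
  unfolding cmod_power2 by (simp add: power2_eq_square algebra_simps)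

lemma circle_line_second_point_exists:
  assumes "d \<noteq> 0" and "Re (p * cnj d) \<noteq> 0"
  shows "\<exists>t::real. t \<noteq> 0 \<and> cmod (p + of_real t * d) = cmod p"
proof (intro exI conjI)
  define c where "c = Re (p * cnj d)"
  define t where "t = - 2 * c / cmod d^2"
  have "c \<noteq> 0" unfolding c_def by (rule assms(2))
  thus "t \<noteq> 0" using assms(1) by (simp add: t_def)
  have "2 * c + t * cmod d^2 = 0" using assms(1) by (simp add: t_def)
  moreover have "cmod (p + of_real t * d)^2 = cmod p^2 + t * (2 * c + t * cmod d^2)"
    unfolding cmod_add_real_mult_power2 c_def by (simp add: algebra_simps power2_eq_square)
  ultimately have "cmod (p + of_real t * d)^2 = cmod p^2" by simp
  thus "cmod (p + of_real t * d) = cmod p" by simp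
qed

text \<open>The chord through two points p, y of the circle |z| = r is the line
  z + p y cnj z / r^2 = p + y; evaluated at a point q of the chord it determines y.\<close>
lemma circle_chord_second_point:
  fixes p y q :: complex and r t :: real
  assumes "cmod p = r" "cmod y = r" "y = p + of_real t * (q - p)" "t \<noteq> 0"
  shows "y * (of_real (r^2) - p * cnj q) = of_real (r^2) * (q - p)"
proof -
  have pp: "p * cnj p = of_real (r^2)" and yy: "y * cnj y = of_real (r^2)"
    using assms(1,2) complex_norm_square[of p] complex_norm_square[of y] by simp_all
  have q: "q = p + (y - p) / of_real t" using assms(3,4) by (simp add: field_simps)
  have "of_real t * (y * (of_real (r^2) - p * cnj q)) = of_real t * (of_real (r^2) * (q - p))"
    unfolding q using assms(4) pp yy by (simp add: field_simps)
  thus ?thesis using assms(4) by simp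
qed

lemma second_int_real:
  fixes p :: complex and q r :: real
  assumes p: "cmod p = r" and q: "\<bar>q\<bar> < r"
  shows "second_int p (of_real q) = of_real (r^2) * (of_real q - p) / (of_real (r^2) - of_real q * p)"
    and "cmod (second_int p (of_real q)) = r"
proof -
  let ?y = "of_real (r^2) * (of_real q - p) / (of_real (r^2) - of_real q * p)"
  let ?P = "\<lambda>y. cmod y = cmod p \<and> (\<exists>t::real. y = p + of_real t * (of_real q - p)) \<and> y \<noteq> p"
  have qp: "cmod (of_real q * p) < r^2"
    using p q by (simp add: norm_mult power2_eq_square mult_strict_right_mono)
  have den: "of_real (r^2) - of_real q * p \<noteq> 0"
  proof
    assume "of_real (r^2) - of_real q * p = 0"
    hence "cmod (of_real q * p) = cmod (of_real (r^2) :: complex)" by (simp only: right_minus_eq)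
    with qp show False by (simp add: norm_power)
  qed
  have "\<bar>q * Re p\<bar> \<le> \<bar>q\<bar> * r"
    using abs_Re_le_cmod[of p] p by (simp add: abs_mult mult_left_mono)
  also have "\<dots> < r^2" using q by (simp add: power2_eq_square mult_strict_right_mono)
  finally have "\<bar>q * Re p\<bar> < r^2" .
  moreover have "Re (p * cnj (of_real q - p)) = q * Re p - r^2"
    using cmod_power2[of p] by (simp add: p[symmetric] power2_eq_square algebra_simps)
  ultimately have "Re (p * cnj (of_real q - p)) \<noteq> 0" by auto
  moreover have "of_real q - p \<noteq> 0" using p q by (metis norm_of_real less_irrefl right_minus_eq)
  ultimately obtain t where "t \<noteq> 0" "cmod (p + of_real t * (of_real q - p)) = cmod p"
    using circle_line_second_point_exists by blast
  hence ex: "?P (p + of_real t * (of_real q - p))" using \<open>of_real q - p \<noteq> 0\<close> by auto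
  have closed_form: "y = ?y" if "?P y" for y
  proof -
    obtain t where "y = p + of_real t * (of_real q - p)" "t \<noteq> 0" using \<open>?P y\<close> by auto
    hence "y * (of_real (r^2) - p * cnj (of_real q)) = of_real (r^2) * (of_real q - p)"
      using \<open>?P y\<close> p by (intro circle_chord_second_point[of p r]) auto
    thus ?thesis using den by (simp add: field_simps)
  qed
  from ex have y: "?P ?y" unfolding closed_form[OF ex] .
  show si: "second_int p (of_real q) = ?y"
    unfolding second_int_def by (rule the_equality[of ?P, OF y closed_form])
  show "cmod (second_int p (of_real q)) = r" using si y p by simp
qed

section \<open>The map P2 as a hyperbolic translation\<close>

text \<open>The Moebius map of the disc |z| < r fixing \<open>\<plusminus>r\<close> and sending 0 to r u; these maps form a
  one-parameter group in which artanh u is additive.\<close>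
definition hyp_translation :: "real \<Rightarrow> real \<Rightarrow> complex \<Rightarrow> complex" where
  "hyp_translation r u z = of_real r * (z + of_real (r * u)) / (of_real r + z * of_real u)"

lemma chord_map_composition:
  fixes R x :: complex
  assumes "R \<noteq> 0" "R^2 + x \<noteq> 0" "1 + R^2 + 2 * x \<noteq> 0" "1 + R^2 \<noteq> 0"
  shows "R^2 * (1 - R^2 * (-1 - x) / (R^2 + x)) / (R^2 - R^2 * (-1 - x) / (R^2 + x))
       = R * (x + R * (2 * R / (1 + R^2))) / (R + x * (2 * R / (1 + R^2)))"
proof -
  have "R^2 - R^2 * (-1 - x) / (R^2 + x) = R^2 * (1 + R^2 + 2 * x) / (R^2 + x)"
    and "1 - R^2 * (-1 - x) / (R^2 + x) = (2 * R^2 + x * (1 + R^2)) / (R^2 + x)"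
    and "R + x * (2 * R / (1 + R^2)) = R * (1 + R^2 + 2 * x) / (1 + R^2)"
    and "x + R * (2 * R / (1 + R^2)) = (2 * R^2 + x * (1 + R^2)) / (1 + R^2)"
    using assms by (simp_all add: field_simps power2_eq_square)
  thus ?thesis using assms by simp
qed

lemma P2_eq_hyp_translation:
  assumes x: "cmod x = r" and r: "r > 1"
  shows "P2 x = hyp_translation r (2 * r / (1 + r^2)) x"
proof -
  define R where "R = complex_of_real r"
  define y where "y = second_int x (-1)"
  have "\<bar>-1\<bar> < r" "\<bar>1\<bar> < r" using r by auto
  hence y_eq: "y = R^2 * (-1 - x) / (R^2 + x)" and y: "cmod y = r"
    using second_int_real[OF x, of "-1"] by (simp_all add: y_def R_def)
  have P2_eq: "P2 x = R^2 * (1 - y) / (R^2 - y)"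
    using second_int_real(1)[OF y, of 1] r by (simp add: P2_def y_def R_def)
  have "r < r^2" using r mult_strict_right_mono[of 1 r r] by (simp add: power2_eq_square)
  moreover have "cmod (R^2) - cmod x \<le> cmod (R^2 + x)" by (rule norm_diff_ineq)
  moreover have "cmod (R^2) = r^2" by (simp add: R_def norm_power)
  ultimately have nz1: "R^2 + x \<noteq> 0" using x by auto
  have "1 + R^2 = complex_of_real (1 + r^2)" by (simp add: R_def)
  hence c: "cmod (1 + R^2) = 1 + r^2" by (simp only: norm_of_real) (rule abs_of_nonneg, simp)
  hence nz3: "1 + R^2 \<noteq> 0" using add_pos_nonneg[OF zero_less_one zero_le_power2[of r]] by auto
  have "0 < (r - 1) * (r - 1)" using r by simp
  hence "2 * r < 1 + r^2" by (simp add: power2_eq_square algebra_simps)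
  moreover have "cmod (1 + R^2) - cmod (2 * x) \<le> cmod (1 + R^2 + 2 * x)" by (rule norm_diff_ineq)
  moreover have "cmod (2 * x) = 2 * r" by (simp add: norm_mult x)
  ultimately have nz2: "1 + R^2 + 2 * x \<noteq> 0" using c by auto
  have "R \<noteq> 0" using r by (simp add: R_def)
  moreover have "hyp_translation r (2 * r / (1 + r^2)) x
      = R * (x + R * (2 * R / (1 + R^2))) / (R + x * (2 * R / (1 + R^2)))"
    by (simp add: hyp_translation_def R_def)
  ultimately show ?thesis
    unfolding P2_eq y_eq using chord_map_composition nz1 nz2 nz3 by simp
qed

section \<open>The flow of Y\<close>

lemma Yfield_on_circle:
  assumes "cmod z = r" "r > 0"
  shows "Yfield z = of_real (2 / r^2) * (of_real (r^2) - z^2)"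
proof -
  have "r^2 = Re z^2 + Im z^2" using assms cmod_power2[of z] by simp
  thus ?thesis using assms(2) unfolding Yfield_def assms(1)
    by (simp add: complex_eq_iff field_simps power2_eq_square)
qed

lemma norm_Yfield_le: "cmod (Yfield z) \<le> 4"
proof (cases "z = 0")
  case False
  have "cmod (Yfield z) = \<bar>4 * (Im z / cmod z) / cmod z\<bar> * cmod z"
    unfolding Yfield_def norm_mult norm_minus_cancel norm_of_real by simp
  also have "\<dots> = 4 * \<bar>Im z\<bar> / cmod z" using False by (simp add: abs_mult)
  also have "\<dots> \<le> 4" using False abs_Im_le_cmod[of z] by (simp add: divide_le_eq)
  finally show ?thesis .
qed (simp add: Yfield_def)

lemma Yfield_tangent: "z * cnj (Yfield z) + Yfield z * cnj z = 0"
  by (simp add: Yfield_def complex_eq_iff algebra_simps)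

lemma hyp_translation_norm:
  assumes "cmod z = r" "r > 0" "\<bar>u\<bar> < 1"
  shows "of_real r + z * of_real u \<noteq> 0" and "cmod (hyp_translation r u z) = r"
proof -
  have zz: "z * cnj z = of_real (r^2)" using assms(1) complex_norm_square[of z] by simp
  have "cmod (z * of_real u) < r" using assms by (simp add: norm_mult)
  thus nz: "of_real r + z * of_real u \<noteq> 0"
    by (metis add_eq_0_iff norm_minus_cancel norm_of_real abs_of_pos assms(2) less_irrefl)
  have "z + of_real (r * u) = z / of_real r * cnj (of_real r + z * of_real u)"
    using assms(2) zz by (simp add: field_simps power2_eq_square)
  hence "cmod (z + of_real (r * u)) = cmod (of_real r + z * of_real u)"
    by (simp only: norm_mult norm_divide complex_mod_cnj) (use assms in simp)
  thus "cmod (hyp_translation r u z) = r"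
    using nz assms(2) by (simp add: hyp_translation_def norm_mult norm_divide)
qed

lemma hyp_translation_zero: "r \<noteq> 0 \<Longrightarrow> hyp_translation r 0 z = z"
  by (simp add: hyp_translation_def)

lemma hyp_translation_minus_cancel:
  assumes "cmod z = r" "r > 0" "\<bar>u\<bar> < 1"
  shows "hyp_translation r u (hyp_translation r (- u) z) = z"
proof -
  define R U where "R = complex_of_real r" and "U = complex_of_real u"
  define w where "w = hyp_translation r (- u) z"
  have "\<bar>- u\<bar> < 1" using assms(3) by simp
  from hyp_translation_norm(1)[OF assms(1,2) this]
  have den: "R - z * U \<noteq> 0" by (simp add: R_def U_def)
  have "u^2 < 1" using assms(3) by (simp add: abs_square_less_1)
  hence U: "1 - U^2 \<noteq> 0" unfolding U_def
    by (metis of_real_1 of_real_diff of_real_eq_0_iff of_real_power less_irrefl right_minus_eq)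
  have R: "R \<noteq> 0" using assms(2) by (simp add: R_def)
  have w: "w = R * (z - R * U) / (R - z * U)"
    by (simp add: w_def hyp_translation_def R_def U_def)
  have "w + R * U = R * z * (1 - U^2) / (R - z * U)" and "R + w * U = R^2 * (1 - U^2) / (R - z * U)"
    unfolding w using den by (simp_all add: field_simps power2_eq_square)
  hence "R * (w + R * U) / (R + w * U) = z" using den R U by (simp add: power2_eq_square)
  thus ?thesis by (simp add: hyp_translation_def w_def R_def U_def)
qed

lemma hyp_translation_has_vector_derivative:
  assumes u: "(u has_real_derivative u') (at t)" and z: "(z has_vector_derivative z') (at t)"
    and nz: "of_real r + z t * of_real (u t) \<noteq> 0"
  shows "((\<lambda>s. hyp_translation r (u s) (z s)) has_vector_derivative
     (of_real (r * u') * (of_real (r^2) - z t ^ 2) + of_real (r^2) * (1 - of_real (u t ^ 2)) * z')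
       / (of_real r + z t * of_real (u t))^2) (at t)"
proof -
  have u': "((\<lambda>s. complex_of_real (u s)) has_derivative (\<lambda>h. h *\<^sub>R of_real u')) (at t)"
    using has_vector_derivative_of_real[OF u] by (simp add: has_vector_derivative_def)
  have z': "(z has_derivative (\<lambda>h. h *\<^sub>R z')) (at t)"
    using z by (simp add: has_vector_derivative_def)
  show ?thesis
    unfolding has_vector_derivative_def hyp_translation_def of_real_mult
    by (rule has_derivative_eq_rhs, (rule derivative_eq_intros u' z' refl nz)+)
       (use nz in \<open>auto simp: fun_eq_iff scaleR_conv_of_real field_simps power2_eq_square\<close>)
qed

lemma tanh_has_real_derivative_scaled:
  "((\<lambda>t. tanh (c * t)) has_real_derivative c * (1 - tanh (c * t)^2)) (at t)"
  by (auto intro!: derivative_eq_intros)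

text \<open>Along the flow of Y the parameter artanh u of the hyperbolic translation grows at rate 2/r.\<close>
definition Yflow :: "complex \<Rightarrow> real \<Rightarrow> complex" where
  "Yflow x t = hyp_translation (cmod x) (tanh (2 / cmod x * t)) x"

lemma Yfield_hyp_translation:
  assumes "cmod x = r" "r > 0" "\<bar>u\<bar> < 1"
  shows "Yfield (hyp_translation r u x) =
    of_real (r * (2 / r * (1 - u^2))) * (of_real (r^2) - x^2) / (of_real r + x * of_real u)^2"
proof -
  define R U where "R = complex_of_real r" and "U = complex_of_real u"
  note nz = hyp_translation_norm[OF assms]
  have R: "R \<noteq> 0" using assms(2) by (simp add: R_def)
  have den: "R + x * U \<noteq> 0" using nz(1) by (simp add: R_def U_def)
  have "Yfield (hyp_translation r u x) = 2 / R^2 * (R^2 - (R * (x + R * U) / (R + x * U))^2)"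
    using Yfield_on_circle[OF nz(2) assms(2)] by (simp add: hyp_translation_def R_def U_def)
  also have "R^2 - (R * (x + R * U) / (R + x * U))^2
      = R^2 * ((R + x * U)^2 - (x + R * U)^2) / (R + x * U)^2"
    using den by (simp add: field_simps) (simp add: power2_eq_square algebra_simps)
  also have "(R + x * U)^2 - (x + R * U)^2 = (R^2 - x^2) * (1 - U^2)"
    by (simp add: power2_eq_square algebra_simps)
  finally show ?thesis using R by (simp add: R_def U_def)
qed

lemma Yflow_has_vector_derivative:
  assumes "x \<noteq> 0"
  shows "(Yflow x has_vector_derivative Yfield (Yflow x t)) (at t)"
proof -
  define r where "r = cmod x"
  have r: "r > 0" and u: "\<bar>tanh (2 / r * t)\<bar> < 1"
    using assms tanh_real_bounds[of "2 / r * t"] by (auto simp: r_def)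
  note nz = hyp_translation_norm[OF r_def[symmetric] r u]
  have Yflow_x: "Yflow x = (\<lambda>s. hyp_translation r (tanh (2 / r * s)) x)"
    by (simp add: fun_eq_iff Yflow_def r_def)
  show ?thesis unfolding Yflow_x
    by (rule has_vector_derivative_eq_rhs[OF hyp_translation_has_vector_derivative[OF
          tanh_has_real_derivative_scaled has_vector_derivative_const nz(1)]])
       (simp only: Yfield_hyp_translation[OF r_def[symmetric] r u], simp)
qed

lemma integral_curve_Yfield_norm:
  assumes "\<And>t. (\<delta> has_vector_derivative Yfield (\<delta> t)) (at t)"
  shows "cmod (\<delta> t) = cmod (\<delta> 0)"
proof -
  have "((\<lambda>t. \<delta> t * cnj (\<delta> t)) has_vector_derivative 0) (at s within UNIV)" for s
    using has_vector_derivative_mult[OF assms has_vector_derivative_cnj[OF assms], of s]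
    by (simp only: Yfield_tangent)
  then obtain c where "\<And>s. \<delta> s * cnj (\<delta> s) = c"
    by (rule has_vector_derivative_zero_constant[OF convex_UNIV]) auto
  hence "complex_of_real (cmod (\<delta> t)^2) = of_real (cmod (\<delta> 0)^2)"
    by (simp only: complex_norm_square)
  hence "cmod (\<delta> t)^2 = cmod (\<delta> 0)^2" by (simp only: of_real_eq_iff)
  thus ?thesis using power2_eq_iff_nonneg[OF norm_ge_zero norm_ge_zero] by blast
qed

lemma integral_curve_Yfield_eq_Yflow:
  assumes x: "x \<noteq> 0" and \<delta>0: "\<delta> 0 = x"
    and \<delta>: "\<And>t. (\<delta> has_vector_derivative Yfield (\<delta> t)) (at t)"
  shows "\<delta> t = Yflow x t"
proof -
  define r where "r = cmod x"
  define T where "T = (\<lambda>s. tanh (2 / r * s))"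
  have r: "r > 0" using x by (simp add: r_def)
  have \<delta>_norm: "cmod (\<delta> s) = r" for s using integral_curve_Yfield_norm[OF \<delta>] \<delta>0 by (simp add: r_def)
  have T: "\<bar>T s\<bar> < 1" "\<bar>- T s\<bar> < 1" for s using tanh_real_bounds[of "2 / r * s"] by (auto simp: T_def)
  \<comment> \<open>pulling \<delta> back along Yflow gives a constant curve\<close>
  define v where "v = (\<lambda>s. hyp_translation r (- T s) (\<delta> s))"
  have "(v has_vector_derivative 0) (at s within UNIV)" for s
  proof -
    have "((\<lambda>s. - T s) has_real_derivative - (2 / r * (1 - T s^2))) (at s)"
      unfolding T_def by (intro DERIV_minus tanh_has_real_derivative_scaled)
    note v' = hyp_translation_has_vector_derivative[OF this \<delta> hyp_translation_norm(1)[OF \<delta>_norm r T(2)]]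
    have numerator: "of_real (r * - (2 / r * (1 - T s^2))) * (of_real (r^2) - \<delta> s^2)
        + of_real (r^2) * (1 - of_real ((- T s)^2)) * Yfield (\<delta> s) = 0"
      using r unfolding Yfield_on_circle[OF \<delta>_norm r] by (simp add: field_simps)
    show ?thesis unfolding v_def
      by (rule has_vector_derivative_eq_rhs[OF v']) (simp only: numerator div_0)
  qed
  then obtain c where c: "\<And>s. v s = c"
    by (rule has_vector_derivative_zero_constant[OF convex_UNIV]) auto
  have "v 0 = x" using r \<delta>0 by (simp add: v_def T_def hyp_translation_zero)
  hence "v t = x" using c by simp
  hence "\<delta> t = hyp_translation r (T t) x"
    using hyp_translation_minus_cancel[OF \<delta>_norm[of t] r T(1)[of t]] by (simp add: v_def)
  thus ?thesis by (simp add: Yflow_def T_def r_def)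
qed

lemma phi1_eq_Yflow:
  assumes "x \<noteq> 0"
  shows "phi1 x = Yflow x 1"
proof -
  have "(THE \<gamma>. \<gamma> 0 = x \<and> (\<forall>t. (\<gamma> has_vector_derivative Yfield (\<gamma> t)) (at t))) = Yflow x"
  proof (rule the_equality)
    show "Yflow x 0 = x \<and> (\<forall>t. (Yflow x has_vector_derivative Yfield (Yflow x t)) (at t))"
      using assms Yflow_has_vector_derivative by (simp add: Yflow_def hyp_translation_zero)
  next
    fix \<gamma> assume "\<gamma> 0 = x \<and> (\<forall>t. (\<gamma> has_vector_derivative Yfield (\<gamma> t)) (at t))"
    thus "\<gamma> = Yflow x" using integral_curve_Yfield_eq_Yflow[OF assms] by blast
  qed
  thus ?thesis by (simp add: phi1_def)
qed

lemma tanh_double_artanh: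
  fixes y :: real assumes "\<bar>y\<bar> < 1"
  shows "tanh (2 * artanh y) = 2 * y / (1 + y^2)"
proof -
  define v where "v = ((1 + y) / (1 - y))^2"
  have v: "v > 0" using assms by (auto simp: v_def abs_less_iff)
  have "- 2 * (2 * artanh y) = - ln v"
    using assms by (simp add: artanh_def v_def ln_realpow)
  hence e: "exp (- 2 * (2 * artanh y)) = inverse v" using v by (simp add: exp_minus)
  have "tanh (2 * artanh y) = (v - 1) / (v + 1)"
    using v unfolding tanh_real_altdef e by (simp add: divide_simps)
  also have "\<dots> = 2 * y / (1 + y^2)"
  proof -
    have "1 - y > 0" "1 + y > 0" "1 + y^2 > 0" using assms by (auto simp: abs_less_iff add_pos_nonneg)
    thus ?thesis by (simp add: v_def divide_simps) (simp add: algebra_simps power2_eq_square)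
  qed
  finally show ?thesis .
qed

lemma P2_eq_Yflow:
  assumes "cmod x = r" "r > 1"
  shows "P2 x = Yflow x (r * artanh (1 / r))"
proof -
  have "tanh (2 / r * (r * artanh (1 / r))) = 2 * r / (1 + r^2)"
    using assms(2) tanh_double_artanh[of "1 / r"] by (simp add: field_simps power2_eq_square)
  thus ?thesis using assms by (simp add: P2_eq_hyp_translation Yflow_def)
qed

lemma norm_diff_le_of_vector_derivative_bound:
  fixes \<gamma> :: "real \<Rightarrow> 'a::real_normed_vector"
  assumes "\<And>t. (\<gamma> has_vector_derivative \<gamma>' t) (at t)" and "\<And>t. norm (\<gamma>' t) \<le> B"
  shows "norm (\<gamma> a - \<gamma> b) \<le> B * \<bar>a - b\<bar>"
proof -
  have "norm (\<gamma> a - \<gamma> b) \<le> B * norm (a - b)"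
  proof (rule differentiable_bound[OF convex_UNIV])
    show "(\<gamma> has_derivative (\<lambda>h. h *\<^sub>R \<gamma>' t)) (at t within UNIV)" for t
      using assms(1) by (simp add: has_vector_derivative_def)
    show "onorm (\<lambda>h. h *\<^sub>R \<gamma>' t) \<le> B" for t
      using assms(2) by (simp add: onorm_scaleR_left onorm_id bounded_linear_ident)
  qed auto
  thus ?thesis by simp
qed

lemma artanh_minus_self_bound:
  fixes y :: real assumes "0 \<le> y" "y \<le> 1/2"
  shows "\<bar>artanh y - y\<bar> \<le> 4/3 * y^3"
proof (cases "y = 0")
  case False
  have "((\<lambda>t. artanh t - t) has_real_derivative 1 / (1 - t^2) - 1) (at t)"
    if "0 \<le> t" "t \<le> y" for t
    using that assms by (auto intro!: derivative_eq_intros)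
  then obtain z where z: "0 < z" "z < y" and mvt: "artanh y - y = y * (1 / (1 - z^2) - 1)"
    using MVT2[of 0 y "\<lambda>t. artanh t - t"] assms False by force
  have "z^2 \<le> y^2" using z by (intro power_mono) auto
  moreover have "y^2 \<le> (1/2)^2" using assms by (intro power_mono) auto
  ultimately have z2: "z^2 \<le> 1/4" "z^2 \<le> y^2" by (simp_all add: power2_eq_square)
  define c where "c = 1 / (1 - z^2) - 1"
  have "c = z^2 / (1 - z^2)" using z2 by (simp add: c_def field_simps)
  also have "\<dots> \<le> z^2 / (3/4)" using z2 by (intro divide_left_mono) auto
  also have "\<dots> \<le> 4/3 * y^2" using z2 by simp
  finally have "y * c \<le> y * (4/3 * y^2)" using assms(1) by (rule mult_left_mono)
  moreover have "0 \<le> y * c" using z2 assms(1) by (simp add: c_def field_simps)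
  ultimately have "\<bar>y * c\<bar> \<le> y * (4/3 * y^2)" by simp
  thus ?thesis unfolding mvt c_def[symmetric] by (simp add: power3_eq_cube power2_eq_square)
qed simp

lemma P2_minus_phi1_bound:
  assumes "cmod x \<ge> 2"
  shows "cmod (P2 x - phi1 x) \<le> 16 / (3 * cmod x^2)"
proof -
  define r where "r = cmod x"
  have r: "r \<ge> 2" "x \<noteq> 0" using assms by (auto simp: r_def)
  have "r * artanh (1 / r) - 1 = r * (artanh (1 / r) - 1 / r)"
    using r by (simp add: right_diff_distrib)
  hence "\<bar>r * artanh (1 / r) - 1\<bar> = r * \<bar>artanh (1 / r) - 1 / r\<bar>"
    using r by (simp add: abs_mult)
  also have "\<dots> \<le> r * (4/3 * (1 / r)^3)"
    using r by (intro mult_left_mono artanh_minus_self_bound) (auto simp: field_simps)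
  finally have time: "\<bar>r * artanh (1 / r) - 1\<bar> \<le> 4 / (3 * r^2)"
    using r by (simp add: field_simps power3_eq_cube power2_eq_square)
  have "cmod (P2 x - phi1 x) = cmod (Yflow x (r * artanh (1 / r)) - Yflow x 1)"
    using r by (simp add: P2_eq_Yflow r_def phi1_eq_Yflow)
  also have "\<dots> \<le> 4 * \<bar>r * artanh (1 / r) - 1\<bar>"
    using Yflow_has_vector_derivative[OF r(2)] norm_Yfield_le
    by (rule norm_diff_le_of_vector_derivative_bound)
  also have "\<dots> \<le> 16 / (3 * r^2)" using time by simp
  finally show ?thesis by (simp add: r_def)
qed

theorem corollary4p14:
  shows "\<exists>R C5::real. R > 1 \<and> (\<forall>x::complex. cmod x \<ge> R \<longrightarrow> cmod (P2 x - phi1 x) \<le> C5 / cmod x)"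
proof (intro exI conjI allI impI)
  fix x :: complex assume x: "cmod x \<ge> 2"
  have "cmod (P2 x - phi1 x) \<le> 16 / (3 * cmod x^2)" using P2_minus_phi1_bound[OF x] .
  also have "\<dots> \<le> 3 / cmod x" using x by (simp add: divide_simps power2_eq_square)
  finally show "cmod (P2 x - phi1 x) \<le> 3 / cmod x" .
qed simp

end
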